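(* Let $k\ge2$ and let $A=\{a_1,\dots,a_n\}$ be a sorted multiset of positive integers ($a_1\le\dots\le a_n$) forming a $k$-PART instance. Then there exists a perfect $p$ for $A$ such that, with $Q=\sum_{i=1}^pa_i$ and $q=\max\{i:a_i\le Q\}$, the $k$-PART$_R$ instance $(A,p)$ has an optimal solution $(S_1,\dots,S_k)$ satisfying: (1) every set $S_i$ containing only elements $j\le q$ satisfies $\Sigma(S_i,A)<2Q$; (2) every element $j>q$ is contained in a singleton set of the solution.
   Context: $[n]=\{1,\dots,n\}$; elements of sets are indices. $\Sigma(S,A)=\sum_{i\in S}a_i$. For pairwise disjoint $S_1,\dots,S_k\subseteq[n]$, $\mathcal{R}(S_1,\dots,S_k,A)=\max_i\Sigma(S_i,A)/\min_i\Sigma(S_i,A)$ if the minimum is positive and $+\infty$ otherwise. $k$-PART: find pairwise disjoint $S_1,\dots,S_k\subseteq[n]$ with $\bigcup_iS_i=[n]$ minimizing $\mathcal{R}$. $k$-PART$_R$ instance $(A,p)$ for $1\le p\le n-k+1$: find pairwise disjoint $S_1,\dots,S_k\subseteq[n]$ with $\bigcup_iS_i=[n]$, $\max(S_1)=p$ and $\max(S_i)>p$ for $1<i\le k$, minimizing $\mathcal{R}$. An integer $p$ with $1\le p\le n-k+1$ is called perfect for $A$ if the optimal ratio of the $k$-PART$_R$ instance $(A,p)$ equals the optimal ratio of the $k$-PART instance $A$. *)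

theory Defs
  imports Complex_Main "HOL-Library.Extended_Real"
begin

text \<open>An instance is a function a :: nat => nat, with elements a 1, ..., a n
  (indices are elements of {1..n}). A candidate solution is S :: nat => nat set,
  whose relevant parts are S 1, ..., S k.\<close>

definition Sig :: "nat set \<Rightarrow> (nat \<Rightarrow> nat) \<Rightarrow> nat" where
  "Sig S a = (\<Sum>i\<in>S. a i)"

definition ratio :: "nat \<Rightarrow> (nat \<Rightarrow> nat set) \<Rightarrow> (nat \<Rightarrow> nat) \<Rightarrow> ereal" where
  "ratio k S a =
     (let mx = Max ((\<lambda>i. Sig (S i) a) ` {1..k});
          mn = Min ((\<lambda>i. Sig (S i) a) ` {1..k})
      in if mn > 0 then ereal (real mx / real mn) else \<infinity>)"

definition is_part :: "nat \<Rightarrow> nat \<Rightarrow> (nat \<Rightarrow> nat set) \<Rightarrow> bool" where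
  "is_part n k S \<longleftrightarrow>
     (\<forall>i\<in>{1..k}. \<forall>j\<in>{1..k}. i \<noteq> j \<longrightarrow> S i \<inter> S j = {}) \<and>
     (\<Union>i\<in>{1..k}. S i) = {1..n}"

definition is_part_R :: "nat \<Rightarrow> nat \<Rightarrow> nat \<Rightarrow> (nat \<Rightarrow> nat set) \<Rightarrow> bool" where
  "is_part_R n k p S \<longleftrightarrow>
     is_part n k S \<and> S 1 \<noteq> {} \<and> Max (S 1) = p \<and>
     (\<forall>i\<in>{2..k}. S i \<noteq> {} \<and> Max (S i) > p)"

definition opt_part :: "nat \<Rightarrow> nat \<Rightarrow> (nat \<Rightarrow> nat) \<Rightarrow> ereal" where
  "opt_part n k a = (INF S\<in>{S. is_part n k S}. ratio k S a)"

definition opt_part_R :: "nat \<Rightarrow> nat \<Rightarrow> (nat \<Rightarrow> nat) \<Rightarrow> nat \<Rightarrow> ereal" where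
  "opt_part_R n k a p = (INF S\<in>{S. is_part_R n k p S}. ratio k S a)"

definition perfect :: "nat \<Rightarrow> nat \<Rightarrow> (nat \<Rightarrow> nat) \<Rightarrow> nat \<Rightarrow> bool" where
  "perfect n k a p \<longleftrightarrow> 1 \<le> p \<and> p \<le> n - k + 1 \<and> opt_part_R n k a p = opt_part n k a"

end

theory Submission
  imports Defs "HOL-Combinatorics.Permutations" "HOL-Library.Product_Lexorder"
begin

text \<open>
  Relabelling the parts of an optimal solution so that \<open>S 1\<close> has the smallest maximal index
  turns it into an optimal solution of k-PART_R for \<open>p = Max (S 1)\<close>, so such a \<open>p\<close> is perfect.
  Among these solutions take one maximising \<open>(Max (S 1), \<Sigma>(S 1))\<close> lexicographically.
  Moving a nonempty set \<open>X \<subseteq> S t\<close> into \<open>S 1\<close> so that both new sums stay between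
  \<open>\<Sigma>(S 1)\<close> and \<open>\<Sigma>(S t)\<close> does not increase the ratio; after relabelling, it either raises
  \<open>Max (S 1)\<close> or keeps it and raises \<open>\<Sigma>(S 1)\<close>, which maximality forbids.
  As \<open>\<Sigma>(S 1) \<le> Q\<close>, such a move exists if an element \<open>j > q\<close> (so \<open>a j > Q\<close>) shares its part
  with other elements (move all of them), or if a part inside \<open>{..q}\<close> has sum \<open>\<ge> 2Q\<close>
  (move one non-maximal element, of weight \<open>\<le> Q\<close>).
\<close>

lemma is_part_subset: "is_part n k S \<Longrightarrow> i \<in> {1..k} \<Longrightarrow> S i \<subseteq> {1..n}"
  unfolding is_part_def by blast

lemma is_part_finite: "is_part n k S \<Longrightarrow> i \<in> {1..k} \<Longrightarrow> finite (S i)"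
  using finite_subset[OF is_part_subset] by blast

lemma is_part_disjoint:
  "is_part n k S \<Longrightarrow> i \<in> {1..k} \<Longrightarrow> j \<in> {1..k} \<Longrightarrow> i \<noteq> j \<Longrightarrow> S i \<inter> S j = {}"
  unfolding is_part_def by blast

lemma is_part_Max_in:
  "is_part n k S \<Longrightarrow> i \<in> {1..k} \<Longrightarrow> S i \<noteq> {} \<Longrightarrow> Max (S i) \<in> S i"
  using is_part_finite Max_in by blast

lemma is_part_Max_inj:
  assumes "is_part n k S" "i \<in> {1..k}" "j \<in> {1..k}" "S i \<noteq> {}" "S j \<noteq> {}"
    and "Max (S i) = Max (S j)"
  shows "i = j"
  using assms is_part_Max_in[OF assms(1)] is_part_disjoint[OF assms(1)] by (metis disjoint_iff)

lemma Sig_mono: "A \<subseteq> B \<Longrightarrow> finite B \<Longrightarrow> Sig A a \<le> Sig B a"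
  unfolding Sig_def by (rule sum_mono2) auto

lemma Sig_pos: "A \<subseteq> {1..n} \<Longrightarrow> A \<noteq> {} \<Longrightarrow> \<forall>i\<in>{1..n}. 0 < a i \<Longrightarrow> 0 < Sig A a"
  unfolding Sig_def by (metis finite_atLeastAtMost finite_subset subsetD sum_pos)

lemma Sig_union_disjoint:
  "finite A \<Longrightarrow> finite B \<Longrightarrow> A \<inter> B = {} \<Longrightarrow> Sig (A \<union> B) a = Sig A a + Sig B a"
  unfolding Sig_def by (rule sum.union_disjoint)

lemma image_comp_permutes: "\<sigma> permutes A \<Longrightarrow> (\<lambda>i. f (\<sigma> i)) ` A = f ` A"
  by (metis image_image permutes_image)

lemma is_part_comp_permutes:
  assumes "\<sigma> permutes {1..k}" "is_part n k S"
  shows "is_part n k (S \<circ> \<sigma>)"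
proof -
  have "\<sigma> i \<in> {1..k} \<longleftrightarrow> i \<in> {1..k}" for i
    using permutes_in_image[OF assms(1)] .
  moreover have "\<sigma> i \<noteq> \<sigma> j" if "i \<noteq> j" for i j
    using permutes_inj[OF assms(1)] that by (meson injD)
  ultimately show ?thesis
    using assms unfolding is_part_def comp_apply image_comp_permutes[OF assms(1)] by blast
qed

lemma ratio_comp_permutes:
  assumes "\<sigma> permutes {1..k}"
  shows "ratio k (S \<circ> \<sigma>) a = ratio k S a"
  unfolding ratio_def comp_apply image_comp_permutes[OF assms, of "\<lambda>i. Sig (S i) a"] ..

lemma ratio_finite_iff: "1 \<le> k \<Longrightarrow> ratio k S a < \<infinity> \<longleftrightarrow> (\<forall>i\<in>{1..k}. 0 < Sig (S i) a)"
  unfolding ratio_def Let_def by (simp add: Min_gr_iff)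

lemma ratio_mono:
  assumes "1 \<le> k" and pos: "\<forall>i\<in>{1..k}. 0 < Sig (S i) a"
    and lower: "\<forall>i\<in>{1..k}. \<exists>j\<in>{1..k}. Sig (S j) a \<le> Sig (S' i) a"
    and upper: "\<forall>i\<in>{1..k}. \<exists>j\<in>{1..k}. Sig (S' i) a \<le> Sig (S j) a"
  shows "ratio k S' a \<le> ratio k S a"
proof -
  let ?A = "(\<lambda>i. Sig (S i) a) ` {1..k}" and ?B = "(\<lambda>i. Sig (S' i) a) ` {1..k}"
  have ne: "?A \<noteq> {}" "?B \<noteq> {}" using \<open>1 \<le> k\<close> by auto
  have min: "Min ?A \<le> Min ?B" using lower ne by (auto simp: Min_le_iff)
  have max: "Max ?B \<le> Max ?A" using upper ne by (subst Max_le_iff) (auto simp: Max_ge_iff)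
  have "0 < Min ?A" using pos ne by (simp add: Min_gr_iff)
  with min have "real (Max ?B) / real (Min ?B) \<le> real (Max ?A) / real (Min ?A)"
    using max by (intro frac_le) simp_all
  with \<open>0 < Min ?A\<close> min show ?thesis
    unfolding ratio_def Let_def by simp
qed

lemma ratio_in_quotients:
  assumes "is_part n k S" "1 \<le> k"
  shows "ratio k S a \<in> (\<lambda>(x, y). if 0 < y then ereal (real x / real y) else \<infinity>) `
           ({..Sig {1..n} a} \<times> {..Sig {1..n} a})"
proof -
  let ?A = "(\<lambda>i. Sig (S i) a) ` {1..k}"
  have "?A \<noteq> {}" using assms(2) by auto
  moreover have "\<forall>x\<in>?A. x \<le> Sig {1..n} a"
    using Sig_mono[OF is_part_subset[OF assms(1)]] by auto
  ultimately have "(Max ?A, Min ?A) \<in> {..Sig {1..n} a} \<times> {..Sig {1..n} a}"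
    using Max_in Min_in by (metis atMost_iff finite_imageI finite_atLeastAtMost mem_Sigma_iff)
  then show ?thesis
    unfolding ratio_def Let_def by (rule rev_image_eqI) simp
qed

lemma opt_part_attained:
  assumes "1 \<le> k"
  shows "\<exists>S. is_part n k S \<and> ratio k S a = opt_part n k a"
proof -
  let ?R = "(\<lambda>S. ratio k S a) ` {S. is_part n k S}"
  have "?R \<subseteq> (\<lambda>(x, y). if 0 < y then ereal (real x / real y) else \<infinity>) `
           ({..Sig {1..n} a} \<times> {..Sig {1..n} a})"
    using ratio_in_quotients[OF _ assms] by blast
  then have "finite ?R" by (rule finite_subset) simp
  moreover have "is_part n k (\<lambda>i. if i = 1 then {1..n} else {})"
    using assms unfolding is_part_def by (auto split: if_splits intro: bexI[of _ 1])
  then have "?R \<noteq> {}" by blast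
  ultimately have "Inf ?R \<in> ?R"
    using Min_in cInf_eq_Min by metis
  then show ?thesis unfolding opt_part_def by auto
qed

lemma opt_part_le: "is_part n k S \<Longrightarrow> opt_part n k a \<le> ratio k S a"
  unfolding opt_part_def by (rule INF_lower) simp

lemma opt_part_finite:
  assumes "1 \<le> k" "k \<le> n" "\<forall>i\<in>{1..n}. 0 < a i"
  shows "opt_part n k a < \<infinity>"
proof -
  define S where "S = (\<lambda>i::nat. if i < k then {i} else {k..n})"
  have part: "is_part n k S"
    using assms(1,2) unfolding is_part_def S_def by auto
  have "\<forall>i\<in>{1..k}. S i \<noteq> {}" using assms(2) unfolding S_def by auto
  then have "ratio k S a < \<infinity>"
    using Sig_pos[OF is_part_subset[OF part] _ assms(3)] ratio_finite_iff[OF assms(1)] by blast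
  then show ?thesis using opt_part_le[OF part] by (rule le_less_trans[rotated])
qed

lemma is_part_move:
  assumes part: "is_part n k S" and t: "t \<in> {1..k}" "t \<noteq> 1" and X: "X \<subseteq> S t"
  shows "is_part n k (S(1 := S 1 \<union> X, t := S t - X))" (is "is_part n k ?S'")
proof -
  have one: "1 \<in> {1..k}" using t by simp
  have disj: "S i \<inter> S j = {}" if "i \<in> {1..k}" "j \<in> {1..k}" "i \<noteq> j" for i j
    using is_part_disjoint[OF part that] .
  have "?S' i \<inter> ?S' j = {}" if ij: "i \<in> {1..k}" "j \<in> {1..k}" "i \<noteq> j" for i j
  proof -
    have "?S' 1 \<inter> ?S' m = {}" if "m \<in> {1..k}" "m \<noteq> 1" for m
    proof (cases "m = t")
      case True
      then show ?thesis using disj[OF one t(1) t(2)[symmetric]] by auto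
    next
      case False
      then show ?thesis
        using disj[OF one that(1) that(2)[symmetric]] disj[OF that(1) t(1) False] X that(2) by auto
    qed
    moreover have "?S' i \<inter> ?S' j = {}" if "i \<noteq> 1" "j \<noteq> 1"
      using disj[OF ij] that by auto
    ultimately show ?thesis using ij by (metis inf_commute)
  qed
  moreover have "(\<Union>i\<in>{1..k}. ?S' i) = (\<Union>i\<in>{1..k}. S i)"
  proof
    show "(\<Union>i\<in>{1..k}. ?S' i) \<subseteq> (\<Union>i\<in>{1..k}. S i)"
    proof
      fix x assume "x \<in> (\<Union>i\<in>{1..k}. ?S' i)"
      then obtain i where i: "i \<in> {1..k}" "x \<in> ?S' i" by blast
      then have "x \<in> S i \<or> x \<in> S 1 \<or> x \<in> S t" using X by (auto split: if_splits)
      then show "x \<in> (\<Union>i\<in>{1..k}. S i)" using i(1) one t(1) by blast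
    qed
    show "(\<Union>i\<in>{1..k}. S i) \<subseteq> (\<Union>i\<in>{1..k}. ?S' i)"
    proof
      fix x assume "x \<in> (\<Union>i\<in>{1..k}. S i)"
      then obtain i where i: "i \<in> {1..k}" "x \<in> S i" by blast
      then have "x \<in> ?S' i \<or> x \<in> ?S' 1" using t(2) by auto
      then show "x \<in> (\<Union>i\<in>{1..k}. ?S' i)" using i(1) one by blast
    qed
  qed
  ultimately show ?thesis using part unfolding is_part_def by simp
qed

lemma ratio_move_le:
  assumes "is_part n k S" "t \<in> {1..k}" "t \<noteq> 1" "X \<subseteq> S t"
    and pos: "\<forall>i\<in>{1..k}. 0 < Sig (S i) a"
    and "Sig (S 1 \<union> X) a \<le> Sig (S t) a" "Sig (S 1) a \<le> Sig (S t - X) a"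
  shows "ratio k (S(1 := S 1 \<union> X, t := S t - X)) a \<le> ratio k S a" (is "ratio k ?S' a \<le> _")
proof (rule ratio_mono)
  have one: "1 \<in> {1..k}" using assms(2) by simp
  have fin: "finite (S 1 \<union> X)" "finite (S t)"
    using is_part_finite[OF assms(1)] one assms(2,4) finite_subset by auto
  define j where "j i = (if i = 1 \<or> i = t then 1 else i)" for i
  define j' where "j' i = (if i = 1 \<or> i = t then t else i)" for i
  have "Sig (S (j i)) a \<le> Sig (?S' i) a" "Sig (?S' i) a \<le> Sig (S (j' i)) a" for i
    unfolding j_def j'_def using assms(3,6,7) Sig_mono[OF _ fin(1)] Sig_mono[OF _ fin(2)] by auto
  moreover have "j i \<in> {1..k}" "j' i \<in> {1..k}" if "i \<in> {1..k}" for i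
    unfolding j_def j'_def using that one assms(2) by auto
  ultimately show "\<forall>i\<in>{1..k}. \<exists>j\<in>{1..k}. Sig (S j) a \<le> Sig (?S' i) a"
    and "\<forall>i\<in>{1..k}. \<exists>j\<in>{1..k}. Sig (?S' i) a \<le> Sig (S j) a"
    by blast+
  show "1 \<le> k" using assms(2) by simp
  show "\<forall>i\<in>{1..k}. 0 < Sig (S i) a" by (fact pos)
qed

lemma is_part_R_transpose:
  assumes part: "is_part n k S" and ne: "\<forall>i\<in>{1..k}. S i \<noteq> {}" and i0: "i0 \<in> {1..k}"
    and least: "\<forall>i\<in>{1..k}. Max (S i0) \<le> Max (S i)"
  shows "is_part_R n k (Max (S i0)) (S \<circ> transpose 1 i0)"
proof -
  have \<tau>: "transpose 1 i0 permutes {1..k}" using i0 by (intro permutes_swap_id) auto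
  have "S (transpose 1 i0 i) \<noteq> {} \<and> Max (S i0) < Max (S (transpose 1 i0 i))"
    if i: "i \<in> {2..k}" for i
  proof -
    let ?j = "transpose 1 i0 i"
    have j: "?j \<in> {1..k}" "?j \<noteq> i0"
      using i permutes_in_image[OF \<tau>, of i] by (auto simp: transpose_def)
    then have "Max (S i0) \<noteq> Max (S ?j)" using is_part_Max_inj[OF part i0 j(1)] ne i0 by auto
    then show ?thesis using least ne j(1) by force
  qed
  then show ?thesis
    using is_part_comp_permutes[OF \<tau> part] ne i0 unfolding is_part_R_def by auto
qed

lemma is_part_R_relabelling:
  assumes "is_part n k S" "\<forall>i\<in>{1..k}. S i \<noteq> {}" "1 \<le> k"
  obtains i0 where "i0 \<in> {1..k}" "is_part_R n k (Max (S i0)) (S \<circ> transpose 1 i0)"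
    "ratio k (S \<circ> transpose 1 i0) a = ratio k S a"
proof -
  let ?M = "(\<lambda>i. Max (S i)) ` {1..k}"
  obtain i0 where i0: "i0 \<in> {1..k}" "Max (S i0) = Min ?M"
    using Min_in[of ?M] assms(3) by fastforce
  then have "\<forall>i\<in>{1..k}. Max (S i0) \<le> Max (S i)" by simp
  moreover have "transpose 1 i0 permutes {1..k}" using i0 by (intro permutes_swap_id) auto
  ultimately show thesis
    using that i0(1) is_part_R_transpose[OF assms(1,2) i0(1)] ratio_comp_permutes by blast
qed

lemma is_part_R_nonempty: "is_part_R n k p S \<Longrightarrow> i \<in> {1..k} \<Longrightarrow> S i \<noteq> {}"
  unfolding is_part_R_def by (cases "i = 1") auto

lemma is_part_R_first_part:
  assumes "is_part_R n k p S" "1 \<le> k"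
  shows "p \<in> S 1" "S 1 \<subseteq> {1..p}"
proof -
  have part: "is_part n k S" and p: "p = Max (S 1)" using assms(1) unfolding is_part_R_def by auto
  have one: "1 \<in> {1..k}" using assms(2) by simp
  show "p \<in> S 1" unfolding p using is_part_Max_in[OF part one is_part_R_nonempty[OF assms(1) one]] .
  show "S 1 \<subseteq> {1..p}"
  proof
    fix x assume x: "x \<in> S 1"
    then have "1 \<le> x" using is_part_subset[OF part one] by auto
    moreover have "x \<le> p" unfolding p using Max_ge[OF is_part_finite[OF part one] x] .
    ultimately show "x \<in> {1..p}" by simp
  qed
qed

lemma is_part_R_le:
  assumes "is_part_R n k p S" "1 \<le> k"
  shows "p \<le> n - k + 1"
proof -
  have part: "is_part n k S" and above: "\<forall>i\<in>{2..k}. p < Max (S i)"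
    using assms(1) unfolding is_part_R_def by auto
  have p: "p \<le> n" using is_part_R_first_part[OF assms] is_part_subset[OF part, of 1] assms(2) by auto
  have "inj_on (\<lambda>i. Max (S i)) {2..k}"
    using is_part_Max_inj[OF part] is_part_R_nonempty[OF assms(1)] by (intro inj_onI) auto
  moreover have "(\<lambda>i. Max (S i)) ` {2..k} \<subseteq> {p<..n}"
  proof
    fix x assume "x \<in> (\<lambda>i. Max (S i)) ` {2..k}"
    then obtain i where i: "i \<in> {2..k}" "x = Max (S i)" by blast
    then have "i \<in> {1..k}" by simp
    then have "x \<in> {1..n}"
      using i(2) is_part_Max_in[OF part _ is_part_R_nonempty[OF assms(1)]] is_part_subset[OF part]
      by blast
    then show "x \<in> {p<..n}" using above i by auto
  qed
  ultimately have "card {2..k} \<le> card {p<..n}" by (intro card_inj_on_le) auto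
  then show ?thesis using p assms(2) by simp
qed

lemma opt_part_le_opt_part_R: "opt_part n k a \<le> opt_part_R n k a p"
  unfolding opt_part_def opt_part_R_def by (rule INF_superset_mono) (auto simp: is_part_R_def)

lemma perfect_if_optimal:
  assumes "is_part_R n k p S" "ratio k S a = opt_part n k a" "1 \<le> k"
  shows "perfect n k a p" "ratio k S a = opt_part_R n k a p"
proof -
  have "opt_part_R n k a p \<le> ratio k S a"
    unfolding opt_part_R_def by (rule INF_lower) (simp add: assms(1))
  then show opt: "ratio k S a = opt_part_R n k a p"
    using opt_part_le_opt_part_R assms(2) by (metis antisym)
  have "1 \<le> p" using is_part_R_first_part[OF assms(1,3)] by auto
  then show "perfect n k a p"
    unfolding perfect_def using is_part_R_le[OF assms(1,3)] opt assms(2) by simp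
qed

definition opt_R_solution :: "nat \<Rightarrow> nat \<Rightarrow> (nat \<Rightarrow> nat) \<Rightarrow> (nat \<Rightarrow> nat set) \<Rightarrow> bool" where
  "opt_R_solution n k a S \<longleftrightarrow> is_part_R n k (Max (S 1)) S \<and> ratio k S a = opt_part n k a"

text \<open>The order on pairs is lexicographic (theory \<open>Product_Lexorder\<close>).\<close>

definition lexmax_opt_R_solution :: "nat \<Rightarrow> nat \<Rightarrow> (nat \<Rightarrow> nat) \<Rightarrow> (nat \<Rightarrow> nat set) \<Rightarrow> bool" where
  "lexmax_opt_R_solution n k a S \<longleftrightarrow> opt_R_solution n k a S \<and>
     (\<forall>S'. opt_R_solution n k a S' \<longrightarrow> (Max (S' 1), Sig (S' 1) a) \<le> (Max (S 1), Sig (S 1) a))"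

lemma exists_opt_R_solution:
  assumes "1 \<le> k" "k \<le> n" "\<forall>i\<in>{1..n}. 0 < a i"
  shows "\<exists>S. opt_R_solution n k a S"
proof -
  obtain S where part: "is_part n k S" and opt: "ratio k S a = opt_part n k a"
    using opt_part_attained[OF assms(1)] by blast
  have "\<forall>i\<in>{1..k}. 0 < Sig (S i) a"
    using opt opt_part_finite[OF assms] ratio_finite_iff[OF assms(1), of S a] by simp
  then have "\<forall>i\<in>{1..k}. S i \<noteq> {}" unfolding Sig_def by fastforce
  then obtain i0 where "i0 \<in> {1..k}" "is_part_R n k (Max (S i0)) (S \<circ> transpose 1 i0)"
    "ratio k (S \<circ> transpose 1 i0) a = ratio k S a"
    using is_part_R_relabelling[OF part _ assms(1)] by blast
  then have "opt_R_solution n k a (S \<circ> transpose 1 i0)"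
    unfolding opt_R_solution_def using opt by simp
  then show ?thesis by blast
qed

lemma exists_lexmax_opt_R_solution:
  assumes "1 \<le> k" "k \<le> n" "\<forall>i\<in>{1..n}. 0 < a i"
  shows "\<exists>S. lexmax_opt_R_solution n k a S"
proof -
  let ?key = "\<lambda>S. (Max (S 1), Sig (S 1) a)"
  let ?P = "?key ` {S. opt_R_solution n k a S}"
  have "?key S \<in> {..n} \<times> {..Sig {1..n} a}" if "opt_R_solution n k a S" for S
  proof -
    have R: "is_part_R n k (Max (S 1)) S" using that unfolding opt_R_solution_def by simp
    then have "S 1 \<subseteq> {1..n}" using is_part_subset[of n k S 1] assms(1) unfolding is_part_R_def by simp
    then show ?thesis using is_part_R_first_part[OF R assms(1)] Sig_mono[of "S 1" "{1..n}"] by auto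
  qed
  then have "finite ?P" by (intro finite_subset[of ?P "{..n} \<times> {..Sig {1..n} a}"]) auto
  moreover have "?P \<noteq> {}" using exists_opt_R_solution[OF assms] by simp
  ultimately have "Max ?P \<in> ?P" by (rule Max_in)
  then obtain S where S: "opt_R_solution n k a S" "Max ?P = ?key S" by blast
  have "?key S' \<le> ?key S" if "opt_R_solution n k a S'" for S'
    unfolding S(2)[symmetric] using \<open>finite ?P\<close> that by (intro Max_ge) auto
  then show ?thesis unfolding lexmax_opt_R_solution_def using S(1) by blast
qed

lemma lexmax_no_improving_move:
  assumes lexmax: "lexmax_opt_R_solution n k a S" and pos: "\<forall>i\<in>{1..n}. 0 < a i"
    and t: "t \<in> {2..k}" and X: "X \<subseteq> S t" "X \<noteq> {}" and y: "y \<in> S t - X" "Max (S 1) < y"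
    and upper: "Sig (S 1 \<union> X) a \<le> Sig (S t) a" and lower: "Sig (S 1) a \<le> Sig (S t - X) a"
  shows False
proof -
  let ?p = "Max (S 1)" and ?S' = "S(1 := S 1 \<union> X, t := S t - X)"
  have R: "is_part_R n k ?p S" and opt: "ratio k S a = opt_part n k a"
    and key: "\<And>S'. opt_R_solution n k a S' \<Longrightarrow> (Max (S' 1), Sig (S' 1) a) \<le> (?p, Sig (S 1) a)"
    using lexmax unfolding lexmax_opt_R_solution_def opt_R_solution_def by auto
  have part: "is_part n k S" and above: "\<forall>i\<in>{2..k}. ?p < Max (S i)"
    using R unfolding is_part_R_def by auto
  have k: "1 \<le> k" and tk: "t \<in> {1..k}" "t \<noteq> 1" and one: "1 \<in> {1..k}" using t by auto
  have "\<forall>i\<in>{1..k}. 0 < Sig (S i) a"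
    using Sig_pos[OF is_part_subset[OF part] is_part_R_nonempty[OF R] pos] by blast
  then have "ratio k ?S' a \<le> ratio k S a" by (rule ratio_move_le[OF part tk X(1) _ upper lower])
  moreover have part': "is_part n k ?S'" by (rule is_part_move[OF part tk X(1)])
  ultimately have opt': "ratio k ?S' a = opt_part n k a"
    using opt opt_part_le[OF part'] by (metis antisym)
  have ne': "\<forall>i\<in>{1..k}. ?S' i \<noteq> {}" using is_part_R_nonempty[OF R] y(1) by auto
  obtain i0 where i0: "i0 \<in> {1..k}" and R': "is_part_R n k (Max (?S' i0)) (?S' \<circ> transpose 1 i0)"
    and ratio': "ratio k (?S' \<circ> transpose 1 i0) a = ratio k ?S' a"
    using is_part_R_relabelling[OF part' ne' k] by blast
  have "opt_R_solution n k a (?S' \<circ> transpose 1 i0)"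
    unfolding opt_R_solution_def using R' ratio' opt' by simp
  from key[OF this] have "(Max (?S' i0), Sig (?S' i0) a) \<le> (?p, Sig (S 1) a)"
    by (simp only: comp_apply transpose_apply_first)
  moreover have "(?p, Sig (S 1) a) < (Max (?S' i0), Sig (?S' i0) a)"
  proof (cases "i0 = 1")
    case True
    have fin: "finite (S 1)" "finite X"
      using is_part_finite[OF part] one tk(1) X(1) finite_subset by auto
    have "S 1 \<inter> X = {}" using is_part_disjoint[OF part one tk(1) tk(2)[symmetric]] X(1) by auto
    then have "Sig (S 1 \<union> X) a = Sig (S 1) a + Sig X a" by (rule Sig_union_disjoint[OF fin])
    moreover have "0 < Sig X a" using Sig_pos[OF _ X(2) pos] X(1) is_part_subset[OF part tk(1)] by blast
    moreover have "?p \<le> Max (S 1 \<union> X)"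
      using fin is_part_R_nonempty[OF R one] by (intro Max_mono) auto
    ultimately show ?thesis using True tk(2) by simp
  next
    case False
    then have "i0 \<in> {2..k}" using i0 by simp
    have "y \<le> Max (S t - X)" using y(1) is_part_finite[OF part tk(1)] by (intro Max_ge) auto
    then have "?p < Max (?S' i)" if "i \<in> {2..k}" for i
      using that above y(2) tk(2) by (cases "i = t") auto
    then show ?thesis using \<open>i0 \<in> {2..k}\<close> by simp
  qed
  ultimately show False by (blast dest: leD)
qed

lemma is_part_R_threshold:
  assumes "is_part_R n k p S" "1 \<le> k"
    and Q: "Q = (\<Sum>i=1..p. a i)" and q: "q = Max {i\<in>{1..n}. a i \<le> Q}"
  shows "Sig (S 1) a \<le> Q" "p \<le> q" "q \<in> {1..n}" "a q \<le> Q" "\<forall>j\<in>{q<..n}. Q < a j"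
proof -
  have p: "p \<in> S 1" "S 1 \<subseteq> {1..p}" using is_part_R_first_part[OF assms(1,2)] by auto
  have "S 1 \<subseteq> {1..n}" using assms(1,2) is_part_subset[of n k S 1] unfolding is_part_R_def by simp
  then have pn: "p \<in> {1..n}" using p(1) by auto
  show "Sig (S 1) a \<le> Q" unfolding Q Sig_def using p(2) by (intro sum_mono2) auto
  have "a p \<le> Q" unfolding Q using p by (intro member_le_sum) auto
  then have p_in: "p \<in> {i\<in>{1..n}. a i \<le> Q}" using pn by simp
  then show "p \<le> q" unfolding q by (intro Max_ge) auto
  have "q \<in> {i\<in>{1..n}. a i \<le> Q}" unfolding q using p_in by (intro Max_in) auto
  then show "q \<in> {1..n}" "a q \<le> Q" by auto
  show "\<forall>j\<in>{q<..n}. Q < a j"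
  proof
    fix j assume j: "j \<in> {q<..n}"
    show "Q < a j"
    proof (rule ccontr)
      assume "\<not> Q < a j"
      then have "j \<le> q" unfolding q using j \<open>p \<le> q\<close> pn by (intro Max_ge) auto
      then show False using j by simp
    qed
  qed
qed

lemma lexmax_large_element_singleton:
  assumes lexmax: "lexmax_opt_R_solution n k a S" and pos: "\<forall>i\<in>{1..n}. 0 < a i" and "1 \<le> k"
    and Q: "Q = (\<Sum>i=1..Max (S 1). a i)" and q: "q = Max {i\<in>{1..n}. a i \<le> Q}"
    and j: "j \<in> {q<..n}"
  shows "\<exists>i\<in>{1..k}. S i = {j}"
proof (rule ccontr)
  assume not_single: "\<not> (\<exists>i\<in>{1..k}. S i = {j})"
  let ?p = "Max (S 1)"
  have R: "is_part_R n k ?p S"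
    using lexmax unfolding lexmax_opt_R_solution_def opt_R_solution_def by simp
  then have part: "is_part n k S" unfolding is_part_R_def by simp
  note threshold = is_part_R_threshold[OF R \<open>1 \<le> k\<close> Q q]
  have "j \<in> {1..n}" using j threshold(3) by auto
  then obtain t where t: "t \<in> {1..k}" "j \<in> S t" using part unfolding is_part_def by blast
  have "?p < j" using j threshold(2) by simp
  then have "t \<noteq> 1" using t(2) is_part_R_first_part(2)[OF R \<open>1 \<le> k\<close>] by auto
  let ?X = "S t - {j}"
  have fin: "finite (S 1)" "finite ?X" using is_part_finite[OF part] t(1) \<open>1 \<le> k\<close> by auto
  have "S 1 \<inter> ?X = {}" using is_part_disjoint[OF part _ t(1)] \<open>t \<noteq> 1\<close> \<open>1 \<le> k\<close> by auto
  then have "Sig (S 1 \<union> ?X) a = Sig (S 1) a + Sig ?X a" by (rule Sig_union_disjoint[OF fin])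
  moreover have "Sig (S t) a = a j + Sig ?X a"
    unfolding Sig_def using t fin(2) by (simp add: sum.remove)
  moreover have "Q < a j" using j threshold(5) by blast
  moreover have "S t - ?X = {j}" using t(2) by auto
  ultimately show False
  proof (intro lexmax_no_improving_move[OF lexmax pos, of t ?X j])
    show "t \<in> {2..k}" using t(1) \<open>t \<noteq> 1\<close> by simp
    show "?X \<noteq> {}" using t not_single by blast
  qed (use threshold(1) t(2) \<open>?p < j\<close> in \<open>auto simp: Sig_def\<close>)
qed

lemma lexmax_small_part_bounded:
  assumes lexmax: "lexmax_opt_R_solution n k a S" and pos: "\<forall>i\<in>{1..n}. 0 < a i"
    and sorted: "\<forall>i\<in>{1..n}. \<forall>j\<in>{1..n}. i \<le> j \<longrightarrow> a i \<le> a j" and "1 \<le> k"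
    and Q: "Q = (\<Sum>i=1..Max (S 1). a i)" and q: "q = Max {i\<in>{1..n}. a i \<le> Q}"
    and i: "i \<in> {1..k}" "S i \<subseteq> {..q}"
  shows "Sig (S i) a < 2 * Q"
proof (rule ccontr)
  assume "\<not> Sig (S i) a < 2 * Q"
  then have large: "2 * Q \<le> Sig (S i) a" by simp
  let ?p = "Max (S 1)" and ?m = "Max (S i)"
  have R: "is_part_R n k ?p S"
    using lexmax unfolding lexmax_opt_R_solution_def opt_R_solution_def by simp
  then have part: "is_part n k S" unfolding is_part_R_def by simp
  note threshold = is_part_R_threshold[OF R \<open>1 \<le> k\<close> Q q]
  have small: "a x \<le> Q" if "x \<in> S i" for x
  proof -
    have "x \<in> {1..n}" "x \<le> q" using that i is_part_subset[OF part i(1)] by auto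
    then have "a x \<le> a q" using sorted threshold(3) by blast
    then show ?thesis using threshold(4) by simp
  qed
  have one: "1 \<in> {1..k}" using \<open>1 \<le> k\<close> by simp
  have "0 < Sig (S 1) a"
    using Sig_pos[OF is_part_subset[OF part one] is_part_R_nonempty[OF R one] pos] .
  then have "0 < Q" using threshold(1) by simp
  have "i \<noteq> 1" using threshold(1) large \<open>0 < Q\<close> by auto
  then have i2: "i \<in> {2..k}" using i(1) by simp
  have fin: "finite (S i)" "finite (S 1)" using is_part_finite[OF part] i(1) one by auto
  have m: "?m \<in> S i" using is_part_Max_in[OF part i(1) is_part_R_nonempty[OF R i(1)]] .
  have "S i \<noteq> {?m}"
  proof
    assume single: "S i = {?m}"
    have "Sig {?m} a = a ?m" by (simp add: Sig_def)
    then have "Sig (S i) a = a ?m" using single by metis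
    then show False using small[OF m] large \<open>0 < Q\<close> by simp
  qed
  then obtain x where x: "x \<in> S i" "x \<noteq> ?m" using m by blast
  have "x \<notin> S 1" using is_part_disjoint[OF part _ i(1)] \<open>i \<noteq> 1\<close> \<open>1 \<le> k\<close> x(1) by auto
  then have "Sig (S 1 \<union> {x}) a = Sig (S 1) a + a x" using fin(2) by (simp add: Sig_def)
  moreover have "Sig (S i) a = a x + Sig (S i - {x}) a"
    unfolding Sig_def using x(1) fin(1) by (simp add: sum.remove)
  moreover have "?p < ?m" using R i2 unfolding is_part_R_def by simp
  moreover have "a x \<le> Q" using small[OF x(1)] .
  ultimately show False
  proof (intro lexmax_no_improving_move[OF lexmax pos i2, of "{x}" ?m])
    show "?m \<in> S i - {x}" using m x(2) by simp
  qed (use x(1) large threshold(1) in simp_all)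
qed

theorem theorem18:
  fixes n k :: nat and a :: "nat \<Rightarrow> nat"
  assumes "k \<ge> 2" and "n \<ge> k"
    and "\<forall>i\<in>{1..n}. a i > 0"
    and "\<forall>i\<in>{1..n}. \<forall>j\<in>{1..n}. i \<le> j \<longrightarrow> a i \<le> a j"
  shows "\<exists>p. perfect n k a p \<and>
           (let Q = (\<Sum>i=1..p. a i); q = Max {i\<in>{1..n}. a i \<le> Q} in
            \<exists>S. is_part_R n k p S \<and> ratio k S a = opt_part_R n k a p \<and>
                (\<forall>i\<in>{1..k}. S i \<subseteq> {..q} \<longrightarrow> Sig (S i) a < 2 * Q) \<and>
                (\<forall>j\<in>{q<..n}. \<exists>i\<in>{1..k}. S i = {j}))"
proof -
  have k: "1 \<le> k" using assms(1) by simp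
  obtain S where lexmax: "lexmax_opt_R_solution n k a S"
    using exists_lexmax_opt_R_solution[OF k assms(2,3)] by blast
  define p where "p = Max (S 1)"
  define Q where "Q = (\<Sum>i=1..p. a i)"
  define q where "q = Max {i\<in>{1..n}. a i \<le> Q}"
  have R: "is_part_R n k p S" and opt: "ratio k S a = opt_part n k a"
    using lexmax unfolding lexmax_opt_R_solution_def opt_R_solution_def p_def by auto
  have "perfect n k a p" "ratio k S a = opt_part_R n k a p"
    using perfect_if_optimal[OF R opt k] by auto
  moreover have "\<forall>i\<in>{1..k}. S i \<subseteq> {..q} \<longrightarrow> Sig (S i) a < 2 * Q"
    using lexmax_small_part_bounded[OF lexmax assms(3,4) k Q_def[unfolded p_def] q_def] by blast
  moreover have "\<forall>j\<in>{q<..n}. \<exists>i\<in>{1..k}. S i = {j}"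
    using lexmax_large_element_singleton[OF lexmax assms(3) k Q_def[unfolded p_def] q_def] by blast
  ultimately have "perfect n k a p \<and>
    (\<exists>S. is_part_R n k p S \<and> ratio k S a = opt_part_R n k a p \<and>
         (\<forall>i\<in>{1..k}. S i \<subseteq> {..q} \<longrightarrow> Sig (S i) a < 2 * Q) \<and>
         (\<forall>j\<in>{q<..n}. \<exists>i\<in>{1..k}. S i = {j}))"
    using R by blast
  then show ?thesis
    unfolding Let_def by (intro exI[of _ p]) (simp only: q_def Q_def)
qed

end
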